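(* Let $M\ge K$, let $\mathbf h_1,\dots,\mathbf h_K\in\mathbb C^{1\times M}$ be linearly independent, and let $\mu_1\ge\mu_2\ge\dots\ge\mu_K\ge0$ with $\sum_k\mu_k=1$. For powers $P_1,\dots,P_K\ge0$ let $\mathbf A^{(0)}=\mathbf I_M$ and $\mathbf A^{(k-1)}=\mathbf I_M+\sum_{j=1}^{k-1}P_j\mathbf h_j^H\mathbf h_j$, and define $R(P_1,\dots,P_K)=\sum_{k=1}^K\mu_k\log_2\left(1+P_k\mathbf h_k(\mathbf A^{(k-1)})^{-1}\mathbf h_k^H\right)$ and $$\mathcal C_{\mathrm{DPC}}(\boldsymbol\mu,\mathbf H,P)=\max_{P_k\ge0,\ \sum_kP_k\le P}R(P_1,\dots,P_K).$$ Then the allocation $P_k=\mu_kP$, $k=1,\dots,K$, is asymptotically optimal at high SNR: $$\lim_{P\to\infty}\left[\mathcal C_{\mathrm{DPC}}(\boldsymbol\mu,\mathbf H,P)-R(\mu_1P,\dots,\mu_KP)\right]=0.$$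
   Context: $\mathcal C_{\mathrm{DPC}}(\boldsymbol\mu,\mathbf H,P)$ is the maximum weighted sum rate $\sum_k\mu_kR_k$ over the dirty-paper-coding capacity region of the MIMO broadcast channel with $M$ transmit antennas and $K$ single-antenna users with channel row vectors $\mathbf h_k$, unit noise and total power $P$, written via the dual multiple-access channel with user $k$ decoded in the presence of users $1,\dots,k-1$. *)

theory Defs
  imports "HOL-Analysis.Analysis"
begin

definition lin_indep_C :: "nat \<Rightarrow> (nat \<Rightarrow> complex ^ 'm) \<Rightarrow> bool" where
  "lin_indep_C K h \<longleftrightarrow>
     (\<forall>c :: nat \<Rightarrow> complex. (\<Sum>k=1..K. c k *s h k) = 0 \<longrightarrow> (\<forall>k\<in>{1..K}. c k = 0))"

definition outer_H :: "complex ^ 'm \<Rightarrow> complex ^ 'm ^ 'm" where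
  "outer_H v = (\<chi> i j. cnj (v $ i) * v $ j)"

text \<open>A^(k-1) = I_M + sum_{j=1}^{k-1} P_j h_j^H h_j.\<close>
definition A_mat :: "(nat \<Rightarrow> complex ^ 'm) \<Rightarrow> (nat \<Rightarrow> real) \<Rightarrow> nat \<Rightarrow> complex ^ 'm ^ 'm" where
  "A_mat h p k = mat 1 + (\<Sum>j=1..<k. (\<chi> a b. complex_of_real (p j) * outer_H (h j) $ a $ b))"

definition quad_H :: "complex ^ 'm \<Rightarrow> complex ^ 'm ^ 'm \<Rightarrow> complex" where
  "quad_H v B = (\<Sum>i\<in>UNIV. \<Sum>j\<in>UNIV. v $ i * B $ i $ j * cnj (v $ j))"

definition wsr :: "nat \<Rightarrow> (nat \<Rightarrow> real) \<Rightarrow> (nat \<Rightarrow> complex ^ 'm) \<Rightarrow> (nat \<Rightarrow> real) \<Rightarrow> real" where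
  "wsr K \<mu> h p = (\<Sum>k=1..K. \<mu> k *
      log 2 (1 + p k * Re (quad_H (h k) (matrix_inv (A_mat h p k)))))"

definition C_DPC :: "nat \<Rightarrow> (nat \<Rightarrow> real) \<Rightarrow> (nat \<Rightarrow> complex ^ 'm) \<Rightarrow> real \<Rightarrow> real" where
  "C_DPC K \<mu> h P = (SUP p \<in> {p. (\<forall>k\<in>{1..K}. 0 \<le> p k) \<and> (\<Sum>k=1..K. p k) \<le> P}. wsr K \<mu> h p)"

end

theory Submission
  imports Defs
begin

text \<open>
  Write Q_k(p) = h_k (A^(k-1))^-1 h_k^H for the effective gain of user k; it depends only on
  the powers of users 1, ..., k-1. Split h_k^H = v_k + sum_{j<k} c_kj h_j^H with v_k orthogonal
  to the earlier channels; linear independence makes v_k nonzero. Solving A y = h_k^H shows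
  |v_k|^2 <= Q_k(p) <= |h_k|^2, and Q_k(p) <= |v_k|^2 + sum_j |c_kj|^2 / m once all earlier
  powers are at least m.

  Every feasible allocation is compared with sum_k mu_k ln (1 + mu_k P |v_k|^2), which the
  proportional allocation P_k = mu_k P exceeds. If every user of positive weight gets power at
  least delta P, then so does every user decoded before it (the weights decrease), its gain is
  within a factor 1 + eps of |v_k|^2, and ln x <= x - 1 bounds the excess by eps + O(1/P).
  Otherwise some user of positive weight is starved: for small delta its term falls below the
  reference by more than all other users together can gain, as their gains lie between |v_k|^2
  and |h_k|^2.
\<close>

lemma mult_le_weighted_squares:
  fixes a b m :: real
  assumes "0 < m"
  shows "a * b \<le> (a\<^sup>2 / m + m * b\<^sup>2) / 2"
proof -
  have "2 * m * (a * b) \<le> a\<^sup>2 + (m * b)\<^sup>2"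
    using sum_squares_bound[of a "m * b"] by (simp add: algebra_simps)
  then show ?thesis
    using assms by (simp add: field_simps power2_eq_square)
qed

lemma ln_one_plus_mult_le:
  fixes g q p :: real
  assumes "0 < g" "g \<le> q" "0 \<le> p"
  shows "ln (1 + p * q) \<le> ln (q / g) + ln (1 + p * g)"
proof -
  have "1 + p * q \<le> q / g * (1 + p * g)"
    using assms by (simp add: field_simps)
  then have "ln (1 + p * q) \<le> ln (q / g * (1 + p * g))"
    using assms by (intro ln_mono) (auto intro: add_pos_nonneg)
  also have "\<dots> = ln (q / g) + ln (1 + p * g)"
    using assms by (intro ln_mult_pos) (auto intro: add_pos_nonneg)
  finally show ?thesis .
qed

text \<open>Gibbs' inequality for a single user: summed over users with \<open>\<Sum> p \<le> P\<close> and
  \<open>\<Sum> \<mu> = 1\<close>, the terms \<open>p / P - \<mu>\<close> add up to at most \<open>0\<close>.\<close>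

lemma weighted_log_gain_excess_le:
  fixes \<mu> g q P p :: real
  assumes "0 \<le> \<mu>" "0 < g" "g \<le> q" "0 < P" "0 \<le> p"
  shows "\<mu> * ln (1 + p * q) - \<mu> * ln (1 + \<mu> * P * g)
    \<le> \<mu> * ln (q / g) + p / P - \<mu> + 1 / (P * g)"
proof -
  define D where "D = 1 + \<mu> * P * g"
  have D: "0 < D" and pg: "0 < 1 + p * g"
    using assms by (simp_all add: D_def add_pos_nonneg)
  have "ln (1 + p * q) - ln D \<le> ln (q / g) + (ln (1 + p * g) - ln D)"
    using ln_one_plus_mult_le[OF assms(2,3,5)] by linarith
  also have "ln (1 + p * g) - ln D \<le> (1 + p * g) / D - 1"
    using D pg by (simp add: ln_divide_pos[symmetric] ln_le_minus_one)
  finally have "\<mu> * (ln (1 + p * q) - ln D) \<le> \<mu> * ln (q / g) + (\<mu> * p * g / D - \<mu> + \<mu> / D)"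
    using assms(1) D by (auto dest: mult_left_mono[of _ _ \<mu>] simp: field_simps)
  moreover have "\<mu> * p * g / D \<le> p / P"
    using assms D by (simp add: D_def field_simps)
  moreover have "\<mu> / D \<le> 1 / (P * g)"
    using assms D by (simp add: D_def field_simps)
  ultimately show ?thesis
    unfolding D_def by (simp add: right_diff_distrib)
qed

lemma log_gain_ratio_le_starved:
  fixes \<mu> g G q P p \<delta> :: real
  assumes "0 < \<mu>" "0 < g" "0 \<le> q" "q \<le> G" "0 < P" "0 \<le> p" "p \<le> \<delta> * P"
  shows "ln (1 + p * q) - ln (1 + \<mu> * P * g) \<le> ln (\<delta> * G / (\<mu> * g) + 1 / (\<mu> * g * P))"
proof -
  have "0 \<le> \<delta>"
    using assms by (metis order.trans zero_le_mult_iff linorder_not_le)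
  have pos: "0 < \<delta> * G / (\<mu> * g) + 1 / (\<mu> * g * P)"
    using assms \<open>0 \<le> \<delta>\<close> by (intro add_nonneg_pos) auto
  have "1 + p * q \<le> 1 + \<delta> * P * G"
    using assms by (intro add_left_mono mult_mono) auto
  also have "\<dots> \<le> (\<delta> * G / (\<mu> * g) + 1 / (\<mu> * g * P)) * (1 + \<mu> * P * g)"
    using assms \<open>0 \<le> \<delta>\<close> by (simp add: field_simps)
  finally have "ln (1 + p * q) \<le> ln ((\<delta> * G / (\<mu> * g) + 1 / (\<mu> * g * P)) * (1 + \<mu> * P * g))"
    using assms by (intro ln_mono) (auto intro: add_pos_nonneg)
  also have "\<dots> = ln (\<delta> * G / (\<mu> * g) + 1 / (\<mu> * g * P)) + ln (1 + \<mu> * P * g)"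
    using assms pos by (intro ln_mult_pos) (auto intro: add_pos_nonneg)
  finally show ?thesis
    by simp
qed

lemma eventually_div_le_at_top:
  fixes a e :: real
  assumes "0 < e"
  shows "\<forall>\<^sub>F x in at_top. a / x \<le> e"
  using eventually_ge_at_top[of "max 1 (a / e)"]
proof (rule eventually_mono)
  fix x assume "max 1 (a / e) \<le> x"
  with assms show "a / x \<le> e"
    by (simp add: divide_le_eq pos_divide_le_eq mult.commute)
qed

lemma tendsto_SUP_minus_value_0:
  fixes f :: "'b \<Rightarrow> real"
  assumes mem: "\<forall>\<^sub>F P in F. x P \<in> S P"
    and near: "\<And>e. 0 < e \<Longrightarrow> \<forall>\<^sub>F P in F. \<forall>p\<in>S P. f p \<le> f (x P) + e"
  shows "((\<lambda>P. (SUP p\<in>S P. f p) - f (x P)) \<longlongrightarrow> 0) F"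
proof (rule tendstoI)
  fix e :: real assume "0 < e"
  then have "\<forall>\<^sub>F P in F. x P \<in> S P \<and> (\<forall>p\<in>S P. f p \<le> f (x P) + e / 2)"
    using mem near[of "e / 2"] by (simp add: eventually_conj)
  then show "\<forall>\<^sub>F P in F. dist ((SUP p\<in>S P. f p) - f (x P)) 0 < e"
  proof (rule eventually_mono)
    fix P assume P: "x P \<in> S P \<and> (\<forall>p\<in>S P. f p \<le> f (x P) + e / 2)"
    then have "f (x P) \<le> (SUP p\<in>S P. f p)"
      by (intro cSUP_upper bdd_aboveI2[of _ _ "f (x P) + e / 2"]) auto
    moreover have "(SUP p\<in>S P. f p) \<le> f (x P) + e / 2"
      using P by (intro cSUP_least) auto
    ultimately show "dist ((SUP p\<in>S P. f p) - f (x P)) 0 < e"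
      using \<open>0 < e\<close> by (simp add: dist_real_def)
  qed
qed

section \<open>Weighted sum rates with successively decoded gains\<close>

text \<open>\<open>Q k p\<close> abstracts the effective gain of user \<open>k\<close> under the powers \<open>p\<close>, which depends
  only on the powers of the users decoded before \<open>k\<close>; \<open>g k\<close> is its limit when those powers grow,
  and \<open>ref_rate P\<close> below is what the proportional allocation would achieve with the gains \<open>g\<close>.\<close>

locale successive_gains =
  fixes K :: nat and \<mu> :: "nat \<Rightarrow> real" and Q :: "nat \<Rightarrow> (nat \<Rightarrow> real) \<Rightarrow> real"
    and g G C :: "nat \<Rightarrow> real"
  assumes weights_antimono: "\<And>i j. 1 \<le> i \<Longrightarrow> i \<le> j \<Longrightarrow> j \<le> K \<Longrightarrow> \<mu> j \<le> \<mu> i"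
    and weights_nonneg: "\<And>k. k \<in> {1..K} \<Longrightarrow> 0 \<le> \<mu> k"
    and weights_sum: "(\<Sum>k=1..K. \<mu> k) = 1"
    and floor_pos: "\<And>k. k \<in> {1..K} \<Longrightarrow> 0 < g k"
    and gain_bounds:
      "\<And>k p. k \<in> {1..K} \<Longrightarrow> \<forall>j\<in>{1..<k}. 0 \<le> p j \<Longrightarrow> g k \<le> Q k p \<and> Q k p \<le> G k"
    and gain_le:
      "\<And>k p m. k \<in> {1..K} \<Longrightarrow> 0 < m \<Longrightarrow> \<forall>j\<in>{1..<k}. m \<le> p j \<Longrightarrow> Q k p \<le> g k + C k / m"
begin

definition feasible :: "real \<Rightarrow> (nat \<Rightarrow> real) set" where
  "feasible P = {p. (\<forall>k\<in>{1..K}. 0 \<le> p k) \<and> (\<Sum>k=1..K. p k) \<le> P}"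

definition rate :: "(nat \<Rightarrow> real) \<Rightarrow> real" where
  "rate p = (\<Sum>k=1..K. \<mu> k * ln (1 + p k * Q k p))"

definition ref_rate :: "real \<Rightarrow> real" where
  "ref_rate P = (\<Sum>k=1..K. \<mu> k * ln (1 + \<mu> k * P * g k))"

lemma weight_le_one: "k \<in> {1..K} \<Longrightarrow> \<mu> k \<le> 1"
  using member_le_sum[of k "{1..K}" \<mu>] weights_nonneg weights_sum by simp

lemma floor_le_ceiling: "k \<in> {1..K} \<Longrightarrow> g k \<le> G k"
  using gain_bounds[of k "\<lambda>_. 0"] by simp

lemma feasible_nonneg: "p \<in> feasible P \<Longrightarrow> k \<in> {1..K} \<Longrightarrow> \<forall>j\<in>{1..<k}. 0 \<le> p j"
  by (simp add: feasible_def)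

lemma proportional_feasible:
  assumes "0 \<le> P"
  shows "(\<lambda>k. \<mu> k * P) \<in> feasible P"
proof -
  have "(\<Sum>k=1..K. \<mu> k * P) = P"
    using weights_sum by (metis sum_distrib_right mult_1)
  then show ?thesis
    using assms by (simp add: feasible_def weights_nonneg)
qed

lemma ref_rate_le_rate_proportional:
  assumes "0 \<le> P"
  shows "ref_rate P \<le> rate (\<lambda>k. \<mu> k * P)"
  unfolding ref_rate_def rate_def
proof (rule sum_mono)
  fix k assume k: "k \<in> {1..K}"
  have "g k \<le> Q k (\<lambda>k. \<mu> k * P)"
    using gain_bounds[OF k feasible_nonneg[OF proportional_feasible[OF assms] k]] by simp
  then have "\<mu> k * P * g k \<le> \<mu> k * P * Q k (\<lambda>k. \<mu> k * P)"
    using assms weights_nonneg[OF k] by (intro mult_left_mono) auto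
  moreover have "0 \<le> \<mu> k * P * g k"
    using assms weights_nonneg[OF k] floor_pos[OF k] by simp
  ultimately have "ln (1 + \<mu> k * P * g k) \<le> ln (1 + \<mu> k * P * Q k (\<lambda>k. \<mu> k * P))"
    by simp
  then show "\<mu> k * ln (1 + \<mu> k * P * g k) \<le> \<mu> k * ln (1 + \<mu> k * P * Q k (\<lambda>k. \<mu> k * P))"
    using weights_nonneg[OF k] by (rule mult_left_mono)
qed

lemma rate_excess_le:
  assumes p: "p \<in> feasible P" and P: "0 < P" and S: "S \<subseteq> {1..K}"
  shows "(\<Sum>k\<in>S. \<mu> k * ln (1 + p k * Q k p) - \<mu> k * ln (1 + \<mu> k * P * g k))
    \<le> (\<Sum>k\<in>S. \<mu> k * ln (Q k p / g k)) + (\<Sum>k\<in>S. p k) / P - (\<Sum>k\<in>S. \<mu> k)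
       + (\<Sum>k=1..K. 1 / g k) / P"
proof -
  have "finite S"
    using S finite_subset by blast
  have "(\<Sum>k\<in>S. \<mu> k * ln (1 + p k * Q k p) - \<mu> k * ln (1 + \<mu> k * P * g k))
      \<le> (\<Sum>k\<in>S. \<mu> k * ln (Q k p / g k) + p k / P - \<mu> k + 1 / (P * g k))"
  proof (rule sum_mono)
    fix k assume "k \<in> S"
    then have k: "k \<in> {1..K}"
      using S by blast
    show "\<mu> k * ln (1 + p k * Q k p) - \<mu> k * ln (1 + \<mu> k * P * g k)
        \<le> \<mu> k * ln (Q k p / g k) + p k / P - \<mu> k + 1 / (P * g k)"
      using gain_bounds[OF k feasible_nonneg[OF p k]] weights_nonneg[OF k] floor_pos[OF k] P p k
      by (intro weighted_log_gain_excess_le) (auto simp: feasible_def)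
  qed
  also have "\<dots> = (\<Sum>k\<in>S. \<mu> k * ln (Q k p / g k)) + (\<Sum>k\<in>S. p k) / P - (\<Sum>k\<in>S. \<mu> k)
      + (\<Sum>k\<in>S. 1 / g k) / P"
    by (simp add: sum.distrib sum_subtractf sum_divide_distrib mult.commute[of P])
  also have "(\<Sum>k\<in>S. 1 / g k) \<le> (\<Sum>k=1..K. 1 / g k)"
    using S floor_pos by (intro sum_mono2) (auto intro: less_imp_le)
  finally show ?thesis
    using P by (simp add: divide_right_mono)
qed

lemma rate_minus_ref_rate:
  "rate p - ref_rate P = (\<Sum>k=1..K. \<mu> k * ln (1 + p k * Q k p) - \<mu> k * ln (1 + \<mu> k * P * g k))"
  by (simp add: rate_def ref_rate_def sum_subtractf)

lemma gain_le_if_weighted_users_served: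
  assumes k: "k \<in> {1..K}" and "0 < \<mu> k" and "0 < m"
    and served: "\<forall>j\<in>{1..K}. 0 < \<mu> j \<longrightarrow> m \<le> p j"
  shows "Q k p \<le> g k + C k / m"
proof -
  have "m \<le> p i" if "i \<in> {1..<k}" for i
    using that k served \<open>0 < \<mu> k\<close> weights_antimono[of i k] by force
  then show ?thesis
    using gain_le[OF k \<open>0 < m\<close>] by blast
qed

lemma rate_excess_le_balanced:
  assumes p: "p \<in> feasible P" and P: "0 < P" and "0 < m" and "0 \<le> \<epsilon>"
    and served: "\<forall>j\<in>{1..K}. 0 < \<mu> j \<longrightarrow> m \<le> p j"
    and interference: "\<forall>k\<in>{1..K}. C k / m \<le> \<epsilon> * g k"
  shows "rate p - ref_rate P \<le> \<epsilon> + (\<Sum>k=1..K. 1 / g k) / P"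
proof -
  have "\<mu> k * ln (Q k p / g k) \<le> \<mu> k * \<epsilon>" if k: "k \<in> {1..K}" for k
  proof (cases "\<mu> k = 0")
    case False
    then have "0 < \<mu> k"
      using weights_nonneg[OF k] by simp
    have "g k \<le> Q k p"
      using gain_bounds[OF k feasible_nonneg[OF p k]] by simp
    moreover have "Q k p \<le> (1 + \<epsilon>) * g k"
    proof -
      have "C k / m \<le> \<epsilon> * g k"
        using interference k by blast
      then show ?thesis
        using gain_le_if_weighted_users_served[OF k \<open>0 < \<mu> k\<close> \<open>0 < m\<close> served]
        by (simp add: distrib_right)
    qed
    ultimately have "ln (Q k p / g k) \<le> ln (1 + \<epsilon>)"
      using floor_pos[OF k] by (intro ln_mono) (simp_all add: pos_divide_le_eq)
    also have "\<dots> \<le> \<epsilon>"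
      using \<open>0 \<le> \<epsilon>\<close> by (simp add: ln_add_one_self_le_self)
    finally show ?thesis
      using \<open>0 < \<mu> k\<close> by simp
  qed simp
  then have "(\<Sum>k=1..K. \<mu> k * ln (Q k p / g k)) \<le> (\<Sum>k=1..K. \<mu> k * \<epsilon>)"
    by (rule sum_mono)
  also have "\<dots> = \<epsilon>"
    using weights_sum by (metis sum_distrib_right mult_1)
  moreover have "(\<Sum>k=1..K. p k) / P \<le> 1"
    using p P by (simp add: feasible_def)
  ultimately show ?thesis
    using rate_excess_le[OF p P order_refl] weights_sum unfolding rate_minus_ref_rate by linarith
qed

lemma rate_excess_le_starved:
  assumes p: "p \<in> feasible P" and P: "0 < P" and j: "j \<in> {1..K}"
    and starved: "\<mu> j * ln (1 + p j * Q j p) - \<mu> j * ln (1 + \<mu> j * P * g j)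
      \<le> - ((\<Sum>k=1..K. ln (G k / g k)) + 2)"
  shows "rate p - ref_rate P \<le> (\<Sum>k=1..K. 1 / g k) / P - 1"
proof -
  define S where "S = {1..K} - {j}"
  have "(\<Sum>k\<in>S. \<mu> k * ln (Q k p / g k)) \<le> (\<Sum>k=1..K. ln (G k / g k))"
  proof -
    have "\<mu> k * ln (Q k p / g k) \<le> ln (G k / g k)" if k: "k \<in> {1..K}" for k
    proof -
      have "g k \<le> Q k p" "Q k p \<le> G k"
        using gain_bounds[OF k feasible_nonneg[OF p k]] by simp_all
      then have "0 \<le> ln (Q k p / g k)" "ln (Q k p / g k) \<le> ln (G k / g k)"
        using floor_pos[OF k] by (simp_all add: divide_right_mono)
      then show ?thesis
        using weights_nonneg[OF k] weight_le_one[OF k] by (metis mult_left_le_one_le order_trans)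
    qed
    moreover have "0 \<le> ln (G k / g k)" if k: "k \<in> {1..K}" for k
      using gain_bounds[OF k, of "\<lambda>_. 0"] floor_pos[OF k] by simp
    ultimately show ?thesis
      unfolding S_def by (intro sum_le_included[where i=id]) auto
  qed
  moreover have "(\<Sum>k\<in>S. p k) / P \<le> 1"
  proof -
    have "(\<Sum>k\<in>S. p k) \<le> (\<Sum>k=1..K. p k)"
      using p unfolding S_def feasible_def by (intro sum_mono2) auto
    then show ?thesis
      using p P by (simp add: feasible_def)
  qed
  moreover have "0 \<le> (\<Sum>k\<in>S. \<mu> k)"
    unfolding S_def by (rule sum_nonneg) (auto intro: weights_nonneg)
  moreover have "rate p - ref_rate P = \<mu> j * ln (1 + p j * Q j p) - \<mu> j * ln (1 + \<mu> j * P * g j)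
      + (\<Sum>k\<in>S. \<mu> k * ln (1 + p k * Q k p) - \<mu> k * ln (1 + \<mu> k * P * g k))"
    unfolding rate_minus_ref_rate S_def using j by (simp add: sum.remove)
  ultimately show ?thesis
    using rate_excess_le[OF p P, of S] starved unfolding S_def by fastforce
qed

lemma starved_user_excess_le:
  assumes p: "p \<in> feasible P" and P: "0 < P" and j: "j \<in> {1..K}" and "0 < \<mu> j"
    and "p j \<le> \<delta> * P"
    and "1 / (\<mu> j * g j * P) \<le> \<delta> * G j / (\<mu> j * g j)"
    and "2 * \<delta> * G j / (\<mu> j * g j) \<le> exp (- b / \<mu> j)"
  shows "\<mu> j * ln (1 + p j * Q j p) - \<mu> j * ln (1 + \<mu> j * P * g j) \<le> - b"
proof -
  have "g j \<le> Q j p" "Q j p \<le> G j"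
    using gain_bounds[OF j feasible_nonneg[OF p j]] by simp_all
  moreover have "0 \<le> p j"
    using p j by (simp add: feasible_def)
  ultimately have "ln (1 + p j * Q j p) - ln (1 + \<mu> j * P * g j)
      \<le> ln (\<delta> * G j / (\<mu> j * g j) + 1 / (\<mu> j * g j * P))"
    using assms floor_pos[OF j] by (intro log_gain_ratio_le_starved) auto
  also have "\<dots> \<le> ln (exp (- b / \<mu> j))"
  proof (rule ln_mono)
    have "0 < 1 / (\<mu> j * g j * P)"
      using assms floor_pos[OF j] by simp
    then show "0 < \<delta> * G j / (\<mu> j * g j) + 1 / (\<mu> j * g j * P)"
      using assms by linarith
    show "\<delta> * G j / (\<mu> j * g j) + 1 / (\<mu> j * g j * P) \<le> exp (- b / \<mu> j)"
      using assms by simp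
  qed
  finally have "\<mu> j * (ln (1 + p j * Q j p) - ln (1 + \<mu> j * P * g j)) \<le> \<mu> j * (- b / \<mu> j)"
    using \<open>0 < \<mu> j\<close> by (intro mult_left_mono) auto
  then show ?thesis
    using \<open>0 < \<mu> j\<close> by (simp add: right_diff_distrib)
qed

lemma exists_starvation_threshold:
  "\<exists>\<delta>>0. \<forall>j\<in>{1..K}. 0 < \<mu> j \<longrightarrow> 2 * \<delta> * G j / (\<mu> j * g j) < exp (- b / \<mu> j)"
proof -
  have "\<mu> j * g j \<noteq> 0" if "j \<in> {1..K}" "0 < \<mu> j" for j
    using that floor_pos[OF that(1)] by simp
  then have "\<forall>\<^sub>F \<delta> in at_right 0.
      0 < \<delta> \<and> (\<forall>j\<in>{j\<in>{1..K}. 0 < \<mu> j}. 2 * \<delta> * G j / (\<mu> j * g j) < exp (- b / \<mu> j))"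
    by (intro eventually_conj eventually_at_right_less eventually_ball_finite ballI order_tendstoD(2))
      (auto intro!: tendsto_eq_intros)
  then have "\<exists>\<delta>. 0 < \<delta> \<and> (\<forall>j\<in>{j\<in>{1..K}. 0 < \<mu> j}. 2 * \<delta> * G j / (\<mu> j * g j) < exp (- b / \<mu> j))"
    by (rule eventually_happens'[OF trivial_limit_at_right_real])
  then show ?thesis
    by (simp add: Ball_def imp_conjL)
qed

lemma eventually_rate_le_ref_rate:
  assumes "0 < e"
  shows "\<forall>\<^sub>F P in at_top. \<forall>p\<in>feasible P. rate p \<le> ref_rate P + e"
proof -
  define B where "B = (\<Sum>k=1..K. ln (G k / g k))"
  \<comment> \<open>A starved user loses \<open>B + 2\<close>, while all others together gain at most \<open>B + 1 + O(1/P)\<close>.\<close>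
  obtain \<delta> where "0 < \<delta>"
    and \<delta>: "\<forall>j\<in>{1..K}. 0 < \<mu> j \<longrightarrow> 2 * \<delta> * G j / (\<mu> j * g j) < exp (- (B + 2) / \<mu> j)"
    using exists_starvation_threshold by blast
  have "\<forall>\<^sub>F P in at_top. 0 < P \<and> (\<Sum>k=1..K. 1 / g k) / P \<le> e / 2
      \<and> (\<forall>k\<in>{1..K}. C k / \<delta> / P \<le> e / 2 * g k)
      \<and> (\<forall>j\<in>{j\<in>{1..K}. 0 < \<mu> j}. 1 / (\<mu> j * g j) / P \<le> \<delta> * G j / (\<mu> j * g j))"
    using assms \<open>0 < \<delta>\<close> floor_pos floor_le_ceiling
    by (intro eventually_conj eventually_gt_at_top eventually_div_le_at_top eventually_ball_finite ballI)
      (auto intro!: divide_pos_pos mult_pos_pos intro: less_le_trans)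
  then show ?thesis
  proof (rule eventually_mono, intro ballI)
    fix P p
    assume "0 < P \<and> (\<Sum>k=1..K. 1 / g k) / P \<le> e / 2
      \<and> (\<forall>k\<in>{1..K}. C k / \<delta> / P \<le> e / 2 * g k)
      \<and> (\<forall>j\<in>{j\<in>{1..K}. 0 < \<mu> j}. 1 / (\<mu> j * g j) / P \<le> \<delta> * G j / (\<mu> j * g j))"
    then have P: "0 < P" and slack: "(\<Sum>k=1..K. 1 / g k) / P \<le> e / 2"
      and interference: "\<forall>k\<in>{1..K}. C k / (\<delta> * P) \<le> e / 2 * g k"
      and starvation: "\<And>j. j \<in> {1..K} \<Longrightarrow> 0 < \<mu> j \<Longrightarrow> 1 / (\<mu> j * g j * P) \<le> \<delta> * G j / (\<mu> j * g j)"
      by (simp_all add: mult.commute)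
    assume p: "p \<in> feasible P"
    consider (balanced) "\<forall>j\<in>{1..K}. 0 < \<mu> j \<longrightarrow> \<delta> * P \<le> p j"
      | (starved) j where "j \<in> {1..K}" "0 < \<mu> j" "p j < \<delta> * P"
      by force
    then show "rate p \<le> ref_rate P + e"
    proof cases
      case balanced
      then have "rate p - ref_rate P \<le> e / 2 + (\<Sum>k=1..K. 1 / g k) / P"
        using assms \<open>0 < \<delta>\<close> P interference by (intro rate_excess_le_balanced[OF p P]) auto
      then show ?thesis
        using slack by linarith
    next
      case starved
      then have "\<mu> j * ln (1 + p j * Q j p) - \<mu> j * ln (1 + \<mu> j * P * g j) \<le> - (B + 2)"
        using \<delta> starvation by (intro starved_user_excess_le[OF p P]) auto
      then have "rate p - ref_rate P \<le> (\<Sum>k=1..K. 1 / g k) / P - 1"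
        unfolding B_def by (rule rate_excess_le_starved[OF p P starved(1)])
      then show ?thesis
        using slack assms by linarith
    qed
  qed
qed

lemma eventually_rate_le_rate_proportional:
  assumes "0 < e"
  shows "\<forall>\<^sub>F P in at_top. \<forall>p\<in>feasible P. rate p \<le> rate (\<lambda>k. \<mu> k * P) + e"
  using eventually_conj[OF eventually_rate_le_ref_rate[OF assms] eventually_ge_at_top[of 0]]
  by (rule eventually_mono) (use ref_rate_le_rate_proportional in fastforce)

end

section \<open>Hermitian inner product and orthogonal decomposition\<close>

definition cinner :: "complex ^ 'n \<Rightarrow> complex ^ 'n \<Rightarrow> complex" where
  "cinner x y = (\<Sum>i\<in>UNIV. cnj (x $ i) * y $ i)"

definition vconj :: "complex ^ 'n \<Rightarrow> complex ^ 'n" where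
  "vconj x = (\<chi> i. cnj (x $ i))"

lemma cinner_zero_left [simp]: "cinner 0 y = 0"
  and cinner_zero_right [simp]: "cinner x 0 = 0"
  by (simp_all add: cinner_def)

lemma cinner_add_left: "cinner (x + y) z = cinner x z + cinner y z"
  and cinner_add_right: "cinner x (y + z) = cinner x y + cinner x z"
  by (simp_all add: cinner_def algebra_simps sum.distrib)

lemma cinner_scale_left: "cinner (c *s x) y = cnj c * cinner x y"
  and cinner_scale_right: "cinner x (c *s y) = c * cinner x y"
  by (simp_all add: cinner_def sum_distrib_left algebra_simps)

lemma cinner_sum_left: "cinner (\<Sum>j\<in>J. f j) y = (\<Sum>j\<in>J. cinner (f j) y)"
  and cinner_sum_right: "cinner x (\<Sum>j\<in>J. f j) = (\<Sum>j\<in>J. cinner x (f j))"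
  by (induction J rule: infinite_finite_induct) (simp_all add: cinner_add_left cinner_add_right)

lemma cnj_cinner: "cnj (cinner x y) = cinner y x"
  by (simp add: cinner_def mult.commute)

lemma Re_cinner_commute: "Re (cinner y x) = Re (cinner x y)"
  by (metis cnj_cinner cnj.sel(1))

lemma inner_eq_Re_cinner: "x \<bullet> y = Re (cinner x y)"
  by (simp add: inner_vec_def cinner_def inner_complex_def)

lemma cinner_self: "cinner x x = complex_of_real ((norm x)\<^sup>2)"
proof -
  have "Im (cinner x x) = 0"
    by (metis cnj_cinner cnj.sel(2) neg_equal_zero)
  then show ?thesis
    by (simp add: complex_eq_iff power2_norm_eq_inner inner_eq_Re_cinner)
qed

lemma cinner_commute_zero: "cinner x y = 0 \<longleftrightarrow> cinner y x = 0"
  by (metis cnj_cinner complex_cnj_zero_iff)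

lemma vconj_vconj [simp]: "vconj (vconj x) = x"
  by (simp add: vconj_def vec_eq_iff)

lemma vconj_sum_scale: "vconj (\<Sum>j\<in>J. c j *s x j) = (\<Sum>j\<in>J. cnj (c j) *s vconj (x j))"
  by (simp add: vconj_def vec_eq_iff)

lemma subspace_range_sum_scale:
  fixes u :: "nat \<Rightarrow> complex ^ 'n"
  shows "subspace (range (\<lambda>c. \<Sum>j\<in>J. c j *s u j))"
  unfolding subspace_def
proof (intro conjI ballI allI)
  show "0 \<in> range (\<lambda>c. \<Sum>j\<in>J. c j *s u j)"
    by (rule range_eqI[where x="\<lambda>_. 0"]) simp
next
  fix a b assume "a \<in> range (\<lambda>c. \<Sum>j\<in>J. c j *s u j)" "b \<in> range (\<lambda>c. \<Sum>j\<in>J. c j *s u j)"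
  then obtain ca cb where "a = (\<Sum>j\<in>J. ca j *s u j)" "b = (\<Sum>j\<in>J. cb j *s u j)"
    by blast
  then show "a + b \<in> range (\<lambda>c. \<Sum>j\<in>J. c j *s u j)"
    by (intro range_eqI[where x="\<lambda>j. ca j + cb j"]) (simp add: sum.distrib)
next
  fix r :: real and a assume "a \<in> range (\<lambda>c. \<Sum>j\<in>J. c j *s u j)"
  then obtain ca where "a = (\<Sum>j\<in>J. ca j *s u j)"
    by blast
  then show "r *\<^sub>R a \<in> range (\<lambda>c. \<Sum>j\<in>J. c j *s u j)"
    by (intro range_eqI[where x="\<lambda>j. of_real r * ca j"])
      (simp only: vec_eq_iff vector_scaleR_component sum_component vector_smult_component,
       simp add: scaleR_conv_of_real sum_distrib_left mult.assoc)
qed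

text \<open>The real inner product of complex vectors is the real part of \<open>cinner\<close>, so complex
  orthogonality to \<open>u j\<close> is real orthogonality to both \<open>u j\<close> and \<open>\<i> *s u j\<close>.\<close>

lemma orthogonal_decomposition:
  fixes u :: "nat \<Rightarrow> complex ^ 'n"
  assumes "finite J"
  obtains c v where "x = v + (\<Sum>j\<in>J. c j *s u j)" and "\<forall>j\<in>J. cinner (u j) v = 0"
proof -
  define W where "W = range (\<lambda>c. \<Sum>j\<in>J. c j *s u j)"
  define S where "S = u ` J \<union> (\<lambda>j. \<i> *s u j) ` J"
  have "S \<subseteq> W"
  proof
    fix s assume "s \<in> S"
    then obtain i w where "i \<in> J" "s = w *s u i"
      unfolding S_def by (auto intro: vector_smult_lid[symmetric])
    moreover have "(\<Sum>j\<in>J. (if j = i then w else 0) *s u j) = (\<Sum>j\<in>J. if j = i then w *s u j else 0)"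
      by (rule sum.cong) auto
    ultimately have "s = (\<Sum>j\<in>J. (if j = i then w else 0) *s u j)"
      using assms by simp
    then show "s \<in> W"
      unfolding W_def by (rule range_eqI[where x="\<lambda>j. if j = i then w else 0"])
  qed
  obtain y z where y: "y \<in> span S" and z: "\<And>w. w \<in> span S \<Longrightarrow> orthogonal z w"
    and xyz: "x = y + z"
    using orthogonal_subspace_decomp_exists by blast
  from y obtain c where c: "y = (\<Sum>j\<in>J. c j *s u j)"
    using span_minimal[OF \<open>S \<subseteq> W\<close> subspace_range_sum_scale[of u J, folded W_def]]
    unfolding W_def by blast
  have "cinner (u j) z = 0" if "j \<in> J" for j
  proof -
    have "u j \<in> span S" "\<i> *s u j \<in> span S"
      using that unfolding S_def by (auto intro: span_base)
    then have "Re (cinner z (u j)) = 0" "Re (cinner z (\<i> *s u j)) = 0"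
      using z unfolding orthogonal_def inner_eq_Re_cinner by blast+
    then have "cinner z (u j) = 0"
      by (simp add: complex_eq_iff cinner_scale_right)
    then show ?thesis
      by (simp add: cinner_commute_zero)
  qed
  then show thesis
    using that[of z c] xyz c by (simp add: add.commute)
qed

lemma successive_orthogonal_decomposition:
  fixes h :: "nat \<Rightarrow> complex ^ 'n"
  obtains v c where "\<And>k. vconj (h k) = v k + (\<Sum>j\<in>{1..<k}. c k j *s vconj (h j))"
    and "\<And>k. \<forall>j\<in>{1..<k}. cinner (vconj (h j)) (v k) = 0"
proof -
  have "\<exists>c v. vconj (h k) = v + (\<Sum>j\<in>{1..<k}. c j *s vconj (h j))
      \<and> (\<forall>j\<in>{1..<k}. cinner (vconj (h j)) v = 0)" for k
    by (rule orthogonal_decomposition[of "{1..<k}"]) auto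
  then show thesis
    using that by metis
qed

lemma orthogonal_residual_nonzero:
  assumes "lin_indep_C K h" and k: "k \<in> {1..K}"
    and decomp: "vconj (h k) = v + (\<Sum>j\<in>{1..<k}. c j *s vconj (h j))"
  shows "v \<noteq> 0"
proof
  assume "v = 0"
  then have hk: "h k = (\<Sum>j\<in>{1..<k}. cnj (c j) *s h j)"
    using arg_cong[OF decomp, of vconj] by (simp add: vconj_sum_scale)
  define d where "d j = (if j = k then 1 else if j < k then - cnj (c j) else 0)" for j
  have "(\<Sum>j=1..K. d j *s h j) = (\<Sum>j\<in>insert k {1..<k}. d j *s h j)"
    using k by (intro sum.mono_neutral_right) (auto simp: d_def)
  also have "\<dots> = h k - (\<Sum>j\<in>{1..<k}. cnj (c j) *s h j)"
    by (simp add: d_def sum_negf)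
  finally have "(\<Sum>j=1..K. d j *s h j) = 0"
    using hk by simp
  then have "d k = 0"
    using assms unfolding lin_indep_C_def by blast
  then show False
    by (simp add: d_def)
qed

section \<open>The effective gain of a user\<close>

lemma A_mat_mult_eq:
  "A_mat h p k *v z = z + (\<Sum>j\<in>{1..<k}. (of_real (p j) * cinner (vconj (h j)) z) *s vconj (h j))"
proof -
  have "(A_mat h p k *v z) $ a
      = z $ a + (\<Sum>j\<in>{1..<k}. of_real (p j) * cinner (vconj (h j)) z * cnj (h j $ a))" for a
  proof -
    have "(mat 1 *v z) $ a = z $ a"
      by simp
    moreover have "(\<Sum>b\<in>UNIV. (\<Sum>j\<in>{1..<k}. of_real (p j) * (cnj (h j $ a) * h j $ b)) * z $ b)
        = (\<Sum>j\<in>{1..<k}. of_real (p j) * cinner (vconj (h j)) z * cnj (h j $ a))"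
      by (simp add: cinner_def vconj_def sum_distrib_left sum_distrib_right sum.swap[of _ UNIV]
          algebra_simps)
    ultimately show ?thesis
      by (simp add: A_mat_def outer_H_def matrix_vector_mult_def distrib_right sum.distrib)
  qed
  then show ?thesis
    by (simp add: vec_eq_iff vconj_def)
qed

lemma cinner_A_mat_right:
  "cinner w (A_mat h p k *v z)
    = cinner w z + (\<Sum>j\<in>{1..<k}. of_real (p j) * cinner (vconj (h j)) z * cinner w (vconj (h j)))"
  by (simp add: A_mat_mult_eq cinner_add_right cinner_sum_right cinner_scale_right)

lemma cinner_A_mat_commute: "cinner (A_mat h p k *v w) z = cinner w (A_mat h p k *v z)"
proof -
  have "cinner (A_mat h p k *v w) z = cnj (cinner z (A_mat h p k *v w))"
    by (simp add: cnj_cinner)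
  also have "\<dots> = cinner w (A_mat h p k *v z)"
    unfolding cinner_A_mat_right by (simp add: cnj_cinner ac_simps)
  finally show ?thesis .
qed

lemma Re_cinner_A_mat_self:
  "Re (cinner z (A_mat h p k *v z))
    = (norm z)\<^sup>2 + (\<Sum>j\<in>{1..<k}. p j * (cmod (cinner (vconj (h j)) z))\<^sup>2)"
proof -
  have "cinner (vconj (h j)) z * cinner z (vconj (h j))
      = of_real ((cmod (cinner (vconj (h j)) z))\<^sup>2)" for j
    by (metis cnj_cinner complex_norm_square)
  then show ?thesis
    by (simp add: cinner_A_mat_right cinner_self mult.assoc)
qed

lemma A_mat_invertible:
  assumes "\<forall>j\<in>{1..<k}. 0 \<le> p j"
  shows "invertible (A_mat h p k)"
proof -
  have "z = 0" if "A_mat h p k *v z = 0" for z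
  proof -
    have "(norm z)\<^sup>2 \<le> Re (cinner z (A_mat h p k *v z))"
      unfolding Re_cinner_A_mat_self using assms by (auto intro!: sum_nonneg)
    then show ?thesis
      using that by simp
  qed
  then show ?thesis
    by (simp add: matrix_left_invertible_ker invertible_left_inverse)
qed

lemma A_mat_mult_orthogonal:
  assumes "\<forall>j\<in>{1..<k}. cinner (vconj (h j)) v = 0"
  shows "A_mat h p k *v v = v"
  using assms by (simp add: A_mat_mult_eq)

lemma matrix_inv_right:
  fixes A :: "'a::semiring_1 ^ 'n ^ 'm"
  assumes "invertible A"
  shows "A ** matrix_inv A = mat 1"
  using assms someI_ex[of "\<lambda>B. A ** B = mat 1 \<and> B ** A = mat 1"]
  unfolding invertible_def matrix_inv_def by blast

lemma A_mat_solves: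
  assumes "\<forall>j\<in>{1..<k}. 0 \<le> p j"
  shows "A_mat h p k *v (matrix_inv (A_mat h p k) *v z) = z"
  using assms by (simp add: matrix_vector_mul_assoc matrix_inv_right A_mat_invertible)

lemma quad_H_eq_cinner: "quad_H v B = cinner (vconj v) (B *v vconj v)"
  unfolding quad_H_def cinner_def vconj_def matrix_vector_mult_def
  by (simp add: sum_distrib_left mult.assoc)

context
  fixes h :: "nat \<Rightarrow> complex ^ 'n" and p :: "nat \<Rightarrow> real" and k :: nat and y :: "complex ^ 'n"
  assumes solves: "A_mat h p k *v y = vconj (h k)"
begin

lemma solution_energy:
  "Re (cinner (vconj (h k)) y) = (norm y)\<^sup>2 + (\<Sum>j\<in>{1..<k}. p j * (cmod (cinner (vconj (h j)) y))\<^sup>2)"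
  using Re_cinner_A_mat_self[of y h p k] Re_cinner_commute[of y "vconj (h k)"] solves by simp

context
  fixes v :: "complex ^ 'n" and c :: "nat \<Rightarrow> complex"
  assumes decomp: "vconj (h k) = v + (\<Sum>j\<in>{1..<k}. c j *s vconj (h j))"
    and orth: "\<forall>j\<in>{1..<k}. cinner (vconj (h j)) v = 0"
begin

lemma cinner_residual_solution: "cinner v y = of_real ((norm v)\<^sup>2)"
proof -
  have "cinner v y = cinner (A_mat h p k *v v) y"
    using orth by (simp add: A_mat_mult_orthogonal)
  also have "\<dots> = cinner v (vconj (h k))"
    by (simp add: cinner_A_mat_commute solves)
  also have "\<dots> = cinner v v"
    using orth
    by (simp add: decomp cinner_add_right cinner_sum_right cinner_scale_right cinner_commute_zero)
  finally show ?thesis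
    by (simp add: cinner_self)
qed

lemma norm_residual_le_solution: "(norm v)\<^sup>2 \<le> (norm y)\<^sup>2"
proof -
  have "(norm (y - v))\<^sup>2 = (norm y)\<^sup>2 - (norm v)\<^sup>2"
    using cinner_residual_solution
    by (simp add: power2_norm_eq_inner inner_diff inner_commute[of y v] inner_eq_Re_cinner[of v y])
  then show ?thesis
    by (metis diff_ge_0_iff_ge zero_le_power2)
qed

lemma solution_gain_bounds:
  assumes "\<forall>j\<in>{1..<k}. 0 \<le> p j"
  shows "(norm v)\<^sup>2 \<le> Re (cinner (vconj (h k)) y)"
    and "Re (cinner (vconj (h k)) y) \<le> (norm (vconj (h k)))\<^sup>2"
proof -
  have "(norm y)\<^sup>2 \<le> Re (cinner (vconj (h k)) y)"
    unfolding solution_energy using assms by (auto intro!: sum_nonneg)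
  then show "(norm v)\<^sup>2 \<le> Re (cinner (vconj (h k)) y)"
    using norm_residual_le_solution by linarith
  have "0 \<le> (norm (vconj (h k) - y))\<^sup>2"
    by simp
  then have "2 * Re (cinner (vconj (h k)) y) \<le> (norm (vconj (h k)))\<^sup>2 + (norm y)\<^sup>2"
    by (simp add: power2_norm_eq_inner inner_diff inner_commute[of y "vconj (h k)"]
        inner_eq_Re_cinner[of "vconj (h k)"])
  with \<open>(norm y)\<^sup>2 \<le> Re (cinner (vconj (h k)) y)\<close>
  show "Re (cinner (vconj (h k)) y) \<le> (norm (vconj (h k)))\<^sup>2"
    by linarith
qed

text \<open>The excess \<open>D\<close> of the gain over \<open>|v|\<^sup>2\<close> is a cross term; AM-GM with weight \<open>m\<close> bounds
  it by \<open>C / (2 m)\<close> plus half the energy \<open>\<Sum> p j |a j|\<^sup>2\<close>, which is itself at most \<open>D\<close>.\<close>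

lemma solution_gain_le:
  assumes m: "0 < m" and pm: "\<forall>j\<in>{1..<k}. m \<le> p j"
  shows "Re (cinner (vconj (h k)) y) \<le> (norm v)\<^sup>2 + (\<Sum>j\<in>{1..<k}. (cmod (c j))\<^sup>2) / m"
proof -
  define a where "a j = cinner (vconj (h j)) y" for j
  define C where "C = (\<Sum>j\<in>{1..<k}. (cmod (c j))\<^sup>2)"
  define D where "D = Re (cinner (vconj (h k)) y) - (norm v)\<^sup>2"
  have "cinner (vconj (h k)) y = of_real ((norm v)\<^sup>2) + (\<Sum>j\<in>{1..<k}. cnj (c j) * a j)"
    unfolding a_def decomp
    by (simp add: cinner_add_left cinner_sum_left cinner_scale_left cinner_residual_solution)
  then have "D = Re (\<Sum>j\<in>{1..<k}. cnj (c j) * a j)"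
    by (simp add: D_def)
  also have "\<dots> \<le> (\<Sum>j\<in>{1..<k}. cmod (c j) * cmod (a j))"
    by (rule order_trans[OF complex_Re_le_cmod order_trans[OF norm_sum]]) (simp add: norm_mult)
  also have "\<dots> \<le> (\<Sum>j\<in>{1..<k}. ((cmod (c j))\<^sup>2 / m + p j * (cmod (a j))\<^sup>2) / 2)"
  proof (rule sum_mono)
    fix j assume "j \<in> {1..<k}"
    then have "m * (cmod (a j))\<^sup>2 \<le> p j * (cmod (a j))\<^sup>2"
      using pm by (simp add: mult_right_mono)
    then show "cmod (c j) * cmod (a j) \<le> ((cmod (c j))\<^sup>2 / m + p j * (cmod (a j))\<^sup>2) / 2"
      using mult_le_weighted_squares[OF m, of "cmod (c j)" "cmod (a j)"]
      by (simp add: divide_right_mono)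
  qed
  also have "\<dots> = (C / m + (\<Sum>j\<in>{1..<k}. p j * (cmod (a j))\<^sup>2)) / 2"
    by (simp add: C_def sum.distrib flip: sum_divide_distrib)
  finally have "D \<le> (C / m + (\<Sum>j\<in>{1..<k}. p j * (cmod (a j))\<^sup>2)) / 2" .
  moreover have "(\<Sum>j\<in>{1..<k}. p j * (cmod (a j))\<^sup>2) \<le> D"
    using solution_energy norm_residual_le_solution unfolding D_def a_def by linarith
  ultimately have "D \<le> C / m"
    by argo
  then show ?thesis
    unfolding C_def D_def by argo
qed

end

end

lemma effective_gain_bounds:
  assumes "\<forall>j\<in>{1..<k}. 0 \<le> p j"
    and "vconj (h k) = v + (\<Sum>j\<in>{1..<k}. c j *s vconj (h j))"
    and "\<forall>j\<in>{1..<k}. cinner (vconj (h j)) v = 0"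
  shows "(norm v)\<^sup>2 \<le> Re (quad_H (h k) (matrix_inv (A_mat h p k)))"
    and "Re (quad_H (h k) (matrix_inv (A_mat h p k))) \<le> (norm (vconj (h k)))\<^sup>2"
  using solution_gain_bounds[OF A_mat_solves[OF assms(1)] assms(2,3,1)]
  by (simp_all add: quad_H_eq_cinner)

lemma effective_gain_le:
  assumes "vconj (h k) = v + (\<Sum>j\<in>{1..<k}. c j *s vconj (h j))"
    and "\<forall>j\<in>{1..<k}. cinner (vconj (h j)) v = 0"
    and "0 < m" and "\<forall>j\<in>{1..<k}. m \<le> p j"
  shows "Re (quad_H (h k) (matrix_inv (A_mat h p k)))
    \<le> (norm v)\<^sup>2 + (\<Sum>j\<in>{1..<k}. (cmod (c j))\<^sup>2) / m"
proof -
  have "\<forall>j\<in>{1..<k}. 0 \<le> p j"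
    using assms(3,4) by (meson less_le_trans less_imp_le)
  then show ?thesis
    using solution_gain_le[OF A_mat_solves assms] by (simp add: quad_H_eq_cinner)
qed

lemma dpc_successive_gains:
  assumes "lin_indep_C K h"
    and "\<And>i j. 1 \<le> i \<Longrightarrow> i \<le> j \<Longrightarrow> j \<le> K \<Longrightarrow> \<mu> j \<le> \<mu> i"
    and "\<And>k. k \<in> {1..K} \<Longrightarrow> 0 \<le> \<mu> k"
    and "(\<Sum>k=1..K. \<mu> k) = 1"
    and decomp: "\<And>k. k \<in> {1..K} \<Longrightarrow> vconj (h k) = v k + (\<Sum>j\<in>{1..<k}. c k j *s vconj (h j))"
    and orth: "\<And>k. k \<in> {1..K} \<Longrightarrow> \<forall>j\<in>{1..<k}. cinner (vconj (h j)) (v k) = 0"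
  shows "successive_gains K \<mu> (\<lambda>k p. Re (quad_H (h k) (matrix_inv (A_mat h p k))))
    (\<lambda>k. (norm (v k))\<^sup>2) (\<lambda>k. (norm (vconj (h k)))\<^sup>2) (\<lambda>k. \<Sum>j\<in>{1..<k}. (cmod (c k j))\<^sup>2)"
proof
  show "\<And>k. k \<in> {1..K} \<Longrightarrow> 0 < (norm (v k))\<^sup>2"
    using orthogonal_residual_nonzero[OF assms(1) _ decomp] by simp
  show "\<And>k p. k \<in> {1..K} \<Longrightarrow> \<forall>j\<in>{1..<k}. 0 \<le> p j \<Longrightarrow>
      (norm (v k))\<^sup>2 \<le> Re (quad_H (h k) (matrix_inv (A_mat h p k)))
      \<and> Re (quad_H (h k) (matrix_inv (A_mat h p k))) \<le> (norm (vconj (h k)))\<^sup>2"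
    using effective_gain_bounds[OF _ decomp orth] by blast
  show "\<And>k p m. k \<in> {1..K} \<Longrightarrow> 0 < m \<Longrightarrow> \<forall>j\<in>{1..<k}. m \<le> p j \<Longrightarrow>
      Re (quad_H (h k) (matrix_inv (A_mat h p k)))
      \<le> (norm (v k))\<^sup>2 + (\<Sum>j\<in>{1..<k}. (cmod (c k j))\<^sup>2) / m"
    using effective_gain_le[OF decomp orth] by blast
qed (use assms in auto)

theorem theorem7:
  fixes K :: nat and h :: "nat \<Rightarrow> complex ^ 'm" and \<mu> :: "nat \<Rightarrow> real"
  assumes "CARD('m) \<ge> K"
    and "lin_indep_C K h"
    and "\<And>i j. 1 \<le> i \<Longrightarrow> i \<le> j \<Longrightarrow> j \<le> K \<Longrightarrow> \<mu> j \<le> \<mu> i"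
    and "\<And>k. k \<in> {1..K} \<Longrightarrow> 0 \<le> \<mu> k"
    and "(\<Sum>k=1..K. \<mu> k) = 1"
  shows "((\<lambda>P. C_DPC K \<mu> h P - wsr K \<mu> h (\<lambda>k. \<mu> k * P)) \<longlongrightarrow> 0) at_top"
proof -
  obtain c v where decomp: "\<And>k. vconj (h k) = v k + (\<Sum>j\<in>{1..<k}. c k j *s vconj (h j))"
    and orth: "\<And>k. \<forall>j\<in>{1..<k}. cinner (vconj (h j)) (v k) = 0"
    using successive_orthogonal_decomposition[of h] by metis
  interpret successive_gains K \<mu> "\<lambda>k p. Re (quad_H (h k) (matrix_inv (A_mat h p k)))"
    "\<lambda>k. (norm (v k))\<^sup>2" "\<lambda>k. (norm (vconj (h k)))\<^sup>2" "\<lambda>k. \<Sum>j\<in>{1..<k}. (cmod (c k j))\<^sup>2"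
    using assms(2-5) decomp orth by (rule dpc_successive_gains)
  have wsr_eq: "wsr K \<mu> h p = rate p / ln 2" for p
    by (simp add: wsr_def rate_def log_def sum_divide_distrib)
  have C_DPC_eq: "C_DPC K \<mu> h P = (SUP p\<in>feasible P. wsr K \<mu> h p)" for P
    by (simp add: C_DPC_def feasible_def)
  show ?thesis
    unfolding C_DPC_eq
  proof (rule tendsto_SUP_minus_value_0)
    show "\<forall>\<^sub>F P in at_top. (\<lambda>k. \<mu> k * P) \<in> feasible P"
      using eventually_ge_at_top[of 0] by (rule eventually_mono) (rule proportional_feasible)
    fix e :: real assume "0 < e"
    then have "\<forall>\<^sub>F P in at_top. \<forall>p\<in>feasible P. rate p \<le> rate (\<lambda>k. \<mu> k * P) + e * ln 2"
      by (intro eventually_rate_le_rate_proportional) simp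
    then show "\<forall>\<^sub>F P in at_top. \<forall>p\<in>feasible P. wsr K \<mu> h p \<le> wsr K \<mu> h (\<lambda>k. \<mu> k * P) + e"
      by (rule eventually_mono) (simp add: wsr_eq pos_divide_le_eq distrib_right)
  qed
qed

end
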